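(* Let $a<b$, $c<d$ and $C\in\mathbb{R}\setminus\{0\}$. Let $(p_n)_{n\ge0}$, $(q_n)_{n\ge0}$ be real sequences with $p_0=q_0$ such that $\sigma(s)=\sum_{n\ge0}p_n(s-a)^n$ and $\tau(t)=\sum_{n\ge0}q_n(t-c)^n$ converge uniformly on $[a,b]$ and $[c,d]$ respectively. Let $k$ be the solution of the Goursat problem $\partial^2k/\partial s\partial t=Ck$ on $[a,b]\times[c,d]$ with $k(s,c)=\sigma(s)$, $k(a,t)=\tau(t)$. Then for all $(s,t)\in[a,b]\times[c,d]$, $$k(s,t)=\sum_{n=1}^\infty\sum_{m=0}^\infty p_n\frac{[C(t-c)]^m(s-a)^{n+m}}{m!}\frac{n!}{(n+m)!}+\sum_{n=0}^\infty\sum_{m=0}^\infty q_n\frac{[C(s-a)]^m(t-c)^{n+m}}{m!}\frac{n!}{(n+m)!},$$ or equivalently $$k(s,t)=\sum_{n=0}^\infty\sum_{m=0}^\infty p_n\frac{[C(t-c)]^m(s-a)^{n+m}}{m!}\frac{n!}{(n+m)!}+\sum_{n=1}^\infty\sum_{m=0}^\infty q_n\frac{[C(s-a)]^m(t-c)^{n+m}}{m!}\frac{n!}{(n+m)!}.$$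
   Context: The solution of the Goursat problem is the continuous function $k$ on $[a,b]\times[c,d]$ with $k(s,t)=\sigma(s)+\tau(t)-\sigma(a)+C\int_a^s\int_c^t k(r,w)\,dw\,dr$ (equivalently, the classical solution given by the Riemann-function representation with the zero-order modified Bessel function $I_0$). *)

theory Defs
  imports "HOL-Analysis.Analysis"
begin

definition goursat_solution ::
  "real \<Rightarrow> real \<Rightarrow> real \<Rightarrow> real \<Rightarrow> real \<Rightarrow> (real \<Rightarrow> real) \<Rightarrow> (real \<Rightarrow> real)
    \<Rightarrow> (real \<Rightarrow> real \<Rightarrow> real) \<Rightarrow> bool" where
  "goursat_solution a b c d C \<sigma> \<tau> k \<longleftrightarrow>
     continuous_on ({a..b} \<times> {c..d}) (\<lambda>(s, t). k s t) \<and>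
     (\<forall>s\<in>{a..b}. \<forall>t\<in>{c..d}.
        k s t = \<sigma> s + \<tau> t - \<sigma> a
                + C * integral {a..s} (\<lambda>r. integral {c..t} (\<lambda>w. k r w)))"

end

theory Submission
  imports Defs
begin

(* With the iterated integral J f (s, t) = int_a^s int_c^t f, the Goursat problem is the Volterra
  equation k - C J k = sigma(s) + tau(t) - sigma(a). This equation is stable: a continuous w with
  |w - C J w| <= eps on the rectangle satisfies |w| <= eps exp (|C| (b - a) (d - c)), as one sees by
  iterating J on the majorants (|C| (s - a) (t - c))^j / (j!)^2. Since C J maps the m-th term of the
  series in the theorem to the (m+1)-st, truncating the data after N terms and the series after M
  terms gives approximate solutions whose defect is at most the error of the data plus a term
  D^M / M!. Stability transfers this to k, and letting M and then N grow gives the expansion. *)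

definition iterated_integral ::
  "real \<Rightarrow> real \<Rightarrow> (real \<Rightarrow> real \<Rightarrow> real) \<Rightarrow> real \<Rightarrow> real \<Rightarrow> real" where
  "iterated_integral a c f s t = integral {a..s} (\<lambda>r. integral {c..t} (\<lambda>w. f r w))"

lemma goursat_solutionD:
  assumes "goursat_solution a b c d C \<sigma> \<tau> k"
  shows "continuous_on ({a..b} \<times> {c..d}) (\<lambda>(s, t). k s t)"
    and "\<And>s t. s \<in> {a..b} \<Longrightarrow> t \<in> {c..d} \<Longrightarrow>
           k s t - C * iterated_integral a c k s t = \<sigma> s + \<tau> t - \<sigma> a"
  using assms unfolding goursat_solution_def iterated_integral_def by auto

lemma iterated_integral_integrable:
  fixes f :: "real \<Rightarrow> real \<Rightarrow> real"
  assumes "continuous_on ({a..s} \<times> {c..t}) (\<lambda>(r, w). f r w)"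
  shows iterated_integral_integrable_inner: "r \<in> {a..s} \<Longrightarrow> f r integrable_on {c..t}"
    and iterated_integral_integrable_outer: "(\<lambda>r. integral {c..t} (f r)) integrable_on {a..s}"
proof -
  assume "r \<in> {a..s}"
  then have "continuous_on {c..t} ((\<lambda>(r, w). f r w) \<circ> Pair r)"
    using assms by (intro continuous_on_compose continuous_intros) (auto elim: continuous_on_subset)
  then show "f r integrable_on {c..t}"
    by (intro integrable_continuous_interval) (simp add: o_def)
next
  show "(\<lambda>r. integral {c..t} (f r)) integrable_on {a..s}"
    using integral_continuous_on_param[of "{a..s}" c t f] assms
    by (intro integrable_continuous_interval) (simp add: cbox_interval)
qed

lemma iterated_integral_add:
  fixes f g :: "real \<Rightarrow> real \<Rightarrow> real"
  assumes "continuous_on ({a..s} \<times> {c..t}) (\<lambda>(r, w). f r w)"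
    and "continuous_on ({a..s} \<times> {c..t}) (\<lambda>(r, w). g r w)"
  shows "iterated_integral a c (\<lambda>r w. f r w + g r w) s t
           = iterated_integral a c f s t + iterated_integral a c g s t"
proof -
  note integrable = iterated_integral_integrable[OF assms(1)] iterated_integral_integrable[OF assms(2)]
  have "iterated_integral a c (\<lambda>r w. f r w + g r w) s t
      = integral {a..s} (\<lambda>r. integral {c..t} (f r) + integral {c..t} (g r))"
    unfolding iterated_integral_def using integrable by (intro integral_cong integral_add) auto
  also have "\<dots> = iterated_integral a c f s t + iterated_integral a c g s t"
    unfolding iterated_integral_def using integrable by (intro integral_add)
  finally show ?thesis .
qed

lemma iterated_integral_diff:
  fixes f g :: "real \<Rightarrow> real \<Rightarrow> real"
  assumes "continuous_on ({a..s} \<times> {c..t}) (\<lambda>(r, w). f r w)"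
    and "continuous_on ({a..s} \<times> {c..t}) (\<lambda>(r, w). g r w)"
  shows "iterated_integral a c (\<lambda>r w. f r w - g r w) s t
           = iterated_integral a c f s t - iterated_integral a c g s t"
proof -
  note integrable = iterated_integral_integrable[OF assms(1)] iterated_integral_integrable[OF assms(2)]
  have "iterated_integral a c (\<lambda>r w. f r w - g r w) s t
      = integral {a..s} (\<lambda>r. integral {c..t} (f r) - integral {c..t} (g r))"
    unfolding iterated_integral_def using integrable by (intro integral_cong integral_diff) auto
  also have "\<dots> = iterated_integral a c f s t - iterated_integral a c g s t"
    unfolding iterated_integral_def using integrable by (intro integral_diff)
  finally show ?thesis .
qed

lemma iterated_integral_sum:
  fixes f :: "'i \<Rightarrow> real \<Rightarrow> real \<Rightarrow> real"
  assumes "finite S" and "\<And>i. i \<in> S \<Longrightarrow> continuous_on ({a..s} \<times> {c..t}) (\<lambda>(r, w). f i r w)"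
  shows "iterated_integral a c (\<lambda>r w. \<Sum>i\<in>S. f i r w) s t = (\<Sum>i\<in>S. iterated_integral a c (f i) s t)"
proof -
  note integrable = iterated_integral_integrable[OF assms(2)]
  have "iterated_integral a c (\<lambda>r w. \<Sum>i\<in>S. f i r w) s t
      = integral {a..s} (\<lambda>r. \<Sum>i\<in>S. integral {c..t} (f i r))"
    unfolding iterated_integral_def using assms(1) integrable by (intro integral_cong integral_sum) auto
  also have "\<dots> = (\<Sum>i\<in>S. iterated_integral a c (f i) s t)"
    unfolding iterated_integral_def using assms(1) integrable by (intro integral_sum)
  finally show ?thesis .
qed

lemma iterated_integral_cmult:
  "iterated_integral a c (\<lambda>r w. K * f r w) s t = K * iterated_integral a c f s t"
  unfolding iterated_integral_def by simp

lemma iterated_integral_abs_le: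
  fixes f g :: "real \<Rightarrow> real \<Rightarrow> real"
  assumes "continuous_on ({a..s} \<times> {c..t}) (\<lambda>(r, w). f r w)"
    and "continuous_on ({a..s} \<times> {c..t}) (\<lambda>(r, w). g r w)"
    and "\<And>r w. r \<in> {a..s} \<Longrightarrow> w \<in> {c..t} \<Longrightarrow> \<bar>f r w\<bar> \<le> g r w"
  shows "\<bar>iterated_integral a c f s t\<bar> \<le> iterated_integral a c g s t"
  unfolding iterated_integral_def real_norm_def [symmetric]
  using iterated_integral_integrable[OF assms(1)] iterated_integral_integrable[OF assms(2)] assms(3)
  by (intro integral_norm_bound_integral) auto

lemma iterated_integral_swap:
  fixes f :: "real \<Rightarrow> real \<Rightarrow> real"
  assumes "continuous_on ({a..s} \<times> {c..t}) (\<lambda>(r, w). f r w)"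
  shows "iterated_integral a c f s t = iterated_integral c a (\<lambda>w r. f r w) t s"
proof -
  have "continuous_on (cbox (a, c) (s, t)) (\<lambda>(r, w). f r w)"
    unfolding cbox_Pair_eq unfolding cbox_interval by (rule assms)
  from integral_swap_continuous[OF this] show ?thesis
    unfolding iterated_integral_def cbox_interval .
qed

lemma integral_power_shifted:
  fixes c t :: real
  assumes "c \<le> t"
  shows "integral {c..t} (\<lambda>w. (w - c) ^ j) = (t - c) ^ Suc j / Suc j"
proof -
  have "((\<lambda>w. (w - c) ^ Suc j / Suc j) has_real_derivative (w - c) ^ j) (at w within {c..t})" for w
    by (intro derivative_eq_intros) auto
  then have "((\<lambda>w. (w - c) ^ j) has_integral (t - c) ^ Suc j / Suc j - (c - c) ^ Suc j / Suc j) {c..t}"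
    by (intro fundamental_theorem_of_calculus assms)
      (simp flip: has_real_derivative_iff_has_vector_derivative)
  then show ?thesis by (simp add: integral_unique)
qed

lemma iterated_integral_monomial:
  assumes "a \<le> s" and "c \<le> t"
  shows "iterated_integral a c (\<lambda>r w. K * (r - a) ^ i * (w - c) ^ j) s t
           = K * (s - a) ^ Suc i * (t - c) ^ Suc j / (Suc i * Suc j)"
proof -
  have "integral {c..t} (\<lambda>w. K * (r - a) ^ i * (w - c) ^ j) = (K * (t - c) ^ Suc j / Suc j) * (r - a) ^ i" for r
    using assms by (simp add: integral_power_shifted)
  then show ?thesis
    unfolding iterated_integral_def using assms by (simp add: integral_power_shifted) (simp add: algebra_simps)
qed

(* The Taylor terms of I_0(2 sqrt x) at x = |C| (r - a) (w - c); they majorise the Picard iterates. *)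
definition bessel_term :: "real \<Rightarrow> real \<Rightarrow> real \<Rightarrow> nat \<Rightarrow> real \<Rightarrow> real \<Rightarrow> real" where
  "bessel_term C a c j r w = (\<bar>C\<bar> * (r - a) * (w - c)) ^ j / (fact j)\<^sup>2"

lemma continuous_on_bessel_term: "continuous_on X (\<lambda>(r, w). bessel_term C a c j r w)"
  unfolding bessel_term_def case_prod_beta by (intro continuous_intros) simp

lemma bessel_term_integral:
  assumes "a \<le> s" and "c \<le> t"
  shows "\<bar>C\<bar> * iterated_integral a c (bessel_term C a c j) s t = bessel_term C a c (Suc j) s t"
proof -
  define K where "K = \<bar>C\<bar> ^ j / (fact j)\<^sup>2"
  have "bessel_term C a c j = (\<lambda>r w. K * (r - a) ^ j * (w - c) ^ j)"
    by (simp add: K_def bessel_term_def fun_eq_iff power_mult_distrib)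
  then have "\<bar>C\<bar> * iterated_integral a c (bessel_term C a c j) s t
      = \<bar>C\<bar> * (K * (s - a) ^ Suc j * (t - c) ^ Suc j / (Suc j * Suc j))"
    by (simp only: iterated_integral_monomial[OF assms])
  also have "\<dots> = bessel_term C a c (Suc j) s t"
    unfolding K_def bessel_term_def fact_Suc power_mult_distrib power2_eq_square
      power_Suc[of "\<bar>C\<bar>"] of_nat_mult
    by (simp add: mult_ac)
  finally show ?thesis .
qed

lemma bessel_majorant_integral:
  assumes "a \<le> s" and "c \<le> t"
  shows "\<bar>C\<bar> * iterated_integral a c
           (\<lambda>r v. \<epsilon> * (\<Sum>j<m. bessel_term C a c j r v) + B * bessel_term C a c m r v) s t
         = \<epsilon> * (\<Sum>j<m. bessel_term C a c (Suc j) s t) + B * bessel_term C a c (Suc m) s t"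
proof -
  have "continuous_on X (\<lambda>(r, v). \<epsilon> * (\<Sum>j<m. bessel_term C a c j r v))"
    and "continuous_on X (\<lambda>(r, v). B * bessel_term C a c m r v)" for X
    unfolding case_prod_beta bessel_term_def by (auto intro!: continuous_intros)
  then have "iterated_integral a c
      (\<lambda>r v. \<epsilon> * (\<Sum>j<m. bessel_term C a c j r v) + B * bessel_term C a c m r v) s t
      = \<epsilon> * iterated_integral a c (\<lambda>r v. \<Sum>j<m. bessel_term C a c j r v) s t
        + B * iterated_integral a c (bessel_term C a c m) s t"
    by (simp add: iterated_integral_add iterated_integral_cmult)
  also have "iterated_integral a c (\<lambda>r v. \<Sum>j<m. bessel_term C a c j r v) s t
      = (\<Sum>j<m. iterated_integral a c (bessel_term C a c j) s t)"
    by (intro iterated_integral_sum continuous_on_bessel_term) simp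
  finally show ?thesis
    using assms bessel_term_integral[of a s c t C]
    by (simp add: algebra_simps sum_distrib_left)
qed

lemma bessel_term_le:
  assumes "a \<le> r" and "c \<le> w"
  shows "0 \<le> bessel_term C a c j r w"
    and "bessel_term C a c j r w \<le> (\<bar>C\<bar> * (r - a) * (w - c)) ^ j / fact j"
  using assms by (auto simp: bessel_term_def power2_eq_square intro!: divide_left_mono)

lemma exp_sums_real: "(\<lambda>j. x ^ j / fact j) sums exp (x::real)"
  using exp_converges[of x] by (simp add: divide_inverse mult.commute)

lemma sum_bessel_term_le_exp:
  assumes "r \<in> {a..b}" and "w \<in> {c..d}"
  shows "(\<Sum>j<m. bessel_term C a c j r w) \<le> exp (\<bar>C\<bar> * (b - a) * (d - c))"
proof -
  define L where "L = \<bar>C\<bar> * (r - a) * (w - c)"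
  have "0 \<le> L" using assms by (simp add: L_def)
  have "(\<Sum>j<m. bessel_term C a c j r w) \<le> (\<Sum>j<m. L ^ j / fact j)"
    using assms by (intro sum_mono) (simp add: L_def bessel_term_le)
  also have "\<dots> \<le> (\<Sum>j. L ^ j / fact j)"
    using \<open>0 \<le> L\<close> by (intro sum_le_suminf sums_summable[OF exp_sums_real]) auto
  also have "\<dots> = exp L"
    by (rule sums_unique[OF exp_sums_real, symmetric])
  also have "\<dots> \<le> exp (\<bar>C\<bar> * (b - a) * (d - c))"
    using assms unfolding L_def exp_le_cancel_iff by (intro mult_mono) auto
  finally show ?thesis .
qed

lemma power_div_fact_tendsto_zero: "(\<lambda>j. (x::real) ^ j / fact j) \<longlonglongrightarrow> 0"
  by (rule summable_LIMSEQ_zero[OF sums_summable[OF exp_sums_real]])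

lemma bessel_term_tendsto_zero:
  assumes "a \<le> r" and "c \<le> w"
  shows "(\<lambda>j. bessel_term C a c j r w) \<longlonglongrightarrow> 0"
proof (rule tendsto_sandwich[OF _ _ tendsto_const power_div_fact_tendsto_zero])
  show "\<forall>\<^sub>F j in sequentially. 0 \<le> bessel_term C a c j r w"
    "\<forall>\<^sub>F j in sequentially. bessel_term C a c j r w \<le> (\<bar>C\<bar> * (r - a) * (w - c)) ^ j / fact j"
    using bessel_term_le[OF assms] by simp_all
qed

lemma goursat_stability_iterate:
  fixes w :: "real \<Rightarrow> real \<Rightarrow> real"
  assumes cont: "continuous_on ({a..b} \<times> {c..d}) (\<lambda>(s, t). w s t)"
    and defect: "\<And>s t. s \<in> {a..b} \<Longrightarrow> t \<in> {c..d} \<Longrightarrow> \<bar>w s t - C * iterated_integral a c w s t\<bar> \<le> \<epsilon>"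
    and bound: "\<And>s t. s \<in> {a..b} \<Longrightarrow> t \<in> {c..d} \<Longrightarrow> \<bar>w s t\<bar> \<le> B"
    and "r \<in> {a..b}" and "v \<in> {c..d}"
  shows "\<bar>w r v\<bar> \<le> \<epsilon> * (\<Sum>j<m. bessel_term C a c j r v) + B * bessel_term C a c m r v"
  using assms(4,5)
proof (induction m arbitrary: r v)
  case 0
  then show ?case using bound by (simp add: bessel_term_def)
next
  case (Suc m)
  define \<phi> where "\<phi> r v = \<epsilon> * (\<Sum>j<m. bessel_term C a c j r v) + B * bessel_term C a c m r v" for r v
  have sub: "{a..r} \<times> {c..v} \<subseteq> {a..b} \<times> {c..d}"
    using Suc.prems by auto
  have integral_le: "\<bar>iterated_integral a c w r v\<bar> \<le> iterated_integral a c \<phi> r v"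
  proof (rule iterated_integral_abs_le[OF continuous_on_subset[OF cont sub]])
    show "continuous_on ({a..r} \<times> {c..v}) (\<lambda>(r, v). \<phi> r v)"
      unfolding \<phi>_def case_prod_beta bessel_term_def by (intro continuous_intros) auto
    show "\<bar>w r' v'\<bar> \<le> \<phi> r' v'" if "r' \<in> {a..r}" "v' \<in> {c..v}" for r' v'
      using Suc.IH[of r' v'] that Suc.prems unfolding \<phi>_def by auto
  qed
  have "\<bar>w r v\<bar> \<le> \<epsilon> + \<bar>C\<bar> * \<bar>iterated_integral a c w r v\<bar>"
    using defect[OF Suc.prems] abs_mult[of C "iterated_integral a c w r v"] by linarith
  also have "\<dots> \<le> \<epsilon> + \<bar>C\<bar> * iterated_integral a c \<phi> r v"
    using integral_le by (simp add: mult_left_mono)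
  also have "\<bar>C\<bar> * iterated_integral a c \<phi> r v
      = \<epsilon> * (\<Sum>j<m. bessel_term C a c (Suc j) r v) + B * bessel_term C a c (Suc m) r v"
    unfolding \<phi>_def using Suc.prems by (intro bessel_majorant_integral) auto
  also have "\<epsilon> + (\<epsilon> * (\<Sum>j<m. bessel_term C a c (Suc j) r v) + B * bessel_term C a c (Suc m) r v)
      = \<epsilon> * (\<Sum>j<Suc m. bessel_term C a c j r v) + B * bessel_term C a c (Suc m) r v"
    unfolding sum.lessThan_Suc_shift by (simp add: bessel_term_def algebra_simps)
  finally show ?case .
qed

lemma goursat_stability:
  fixes w :: "real \<Rightarrow> real \<Rightarrow> real"
  assumes cont: "continuous_on ({a..b} \<times> {c..d}) (\<lambda>(s, t). w s t)"
    and defect: "\<And>s t. s \<in> {a..b} \<Longrightarrow> t \<in> {c..d} \<Longrightarrow> \<bar>w s t - C * iterated_integral a c w s t\<bar> \<le> \<epsilon>"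
    and st: "s \<in> {a..b}" "t \<in> {c..d}"
  shows "\<bar>w s t\<bar> \<le> \<epsilon> * exp (\<bar>C\<bar> * (b - a) * (d - c))"
proof -
  have "compact ((\<lambda>(s, t). w s t) ` ({a..b} \<times> {c..d}))"
    by (intro compact_continuous_image cont compact_Times compact_Icc)
  then obtain B where "\<forall>x \<in> (\<lambda>(s, t). w s t) ` ({a..b} \<times> {c..d}). norm x \<le> B"
    using compact_imp_bounded bounded_iff by metis
  then have bound: "\<bar>w r v\<bar> \<le> B" if "r \<in> {a..b}" "v \<in> {c..d}" for r v
    using that by force
  have "0 \<le> \<epsilon>"
    using defect[OF st] by linarith
  define E where "E = exp (\<bar>C\<bar> * (b - a) * (d - c))"
  have "\<bar>w s t\<bar> \<le> \<epsilon> * E + B * bessel_term C a c m s t" for m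
    using goursat_stability_iterate[OF cont defect bound st, of m]
      mult_left_mono[OF sum_bessel_term_le_exp[OF st, of C m] \<open>0 \<le> \<epsilon>\<close>]
    unfolding E_def by linarith
  moreover have "(\<lambda>m. \<epsilon> * E + B * bessel_term C a c m s t) \<longlonglongrightarrow> \<epsilon> * E + B * 0"
    using st by (intro tendsto_intros bessel_term_tendsto_zero) auto
  ultimately show ?thesis
    unfolding E_def by (simp add: LIMSEQ_le_const)
qed

definition goursat_term :: "(nat \<Rightarrow> real) \<Rightarrow> real \<Rightarrow> real \<Rightarrow> real \<Rightarrow> nat \<Rightarrow> nat \<Rightarrow> real \<Rightarrow> real \<Rightarrow> real" where
  "goursat_term \<alpha> C a c n m s t =
     \<alpha> n * (C * (t - c)) ^ m * (s - a) ^ (n + m) / fact m * fact n / fact (n + m)"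

definition goursat_partial_sum ::
  "(nat \<Rightarrow> real) \<Rightarrow> real \<Rightarrow> real \<Rightarrow> real \<Rightarrow> nat set \<Rightarrow> nat \<Rightarrow> real \<Rightarrow> real \<Rightarrow> real" where
  "goursat_partial_sum \<alpha> C a c S M s t = (\<Sum>n\<in>S. \<Sum>m<M. goursat_term \<alpha> C a c n m s t)"

lemma goursat_term_0: "goursat_term \<alpha> C a c n 0 s t = \<alpha> n * (s - a) ^ n"
  by (simp add: goursat_term_def)

lemma continuous_on_goursat_term: "continuous_on X (\<lambda>(r, w). goursat_term \<alpha> C a c n m r w)"
  unfolding goursat_term_def case_prod_beta by (intro continuous_intros) auto

lemma continuous_on_goursat_partial_sum:
  "continuous_on X (\<lambda>(r, w). goursat_partial_sum \<alpha> C a c S M r w)"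
  unfolding goursat_partial_sum_def goursat_term_def case_prod_beta by (intro continuous_intros) auto

lemma goursat_term_integral:
  assumes "a \<le> s" and "c \<le> t"
  shows "C * iterated_integral a c (goursat_term \<alpha> C a c n m) s t = goursat_term \<alpha> C a c n (Suc m) s t"
proof -
  define K where "K = \<alpha> n * C ^ m / fact m * fact n / fact (n + m)"
  have "goursat_term \<alpha> C a c n m = (\<lambda>r w. K * (r - a) ^ (n + m) * (w - c) ^ m)"
    by (simp add: K_def goursat_term_def fun_eq_iff power_mult_distrib)
  then have "C * iterated_integral a c (goursat_term \<alpha> C a c n m) s t
      = C * (K * (s - a) ^ Suc (n + m) * (t - c) ^ Suc m / (Suc (n + m) * Suc m))"
    by (simp only: iterated_integral_monomial[OF assms])
  also have "\<dots> = goursat_term \<alpha> C a c n (Suc m) s t"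
  proof -
    have "C * (K * x ^ Suc (n + m) * y ^ Suc m / (Suc (n + m) * Suc m))
        = \<alpha> n * (C * y) ^ Suc m * x ^ (n + Suc m) / fact (Suc m) * fact n / fact (n + Suc m)"
      for x y :: real
      unfolding K_def add_Suc_right fact_Suc power_mult_distrib
      by (simp add: field_simps del: of_nat_Suc) (simp add: algebra_simps)
    then show ?thesis unfolding goursat_term_def .
  qed
  finally show ?thesis .
qed

lemma goursat_partial_sum_defect:
  assumes "finite S" and "a \<le> s" and "c \<le> t"
  shows "goursat_partial_sum \<alpha> C a c S M s t - C * iterated_integral a c (goursat_partial_sum \<alpha> C a c S M) s t
           = (\<Sum>n\<in>S. \<alpha> n * (s - a) ^ n) - (\<Sum>n\<in>S. goursat_term \<alpha> C a c n M s t)"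
proof -
  have "C * iterated_integral a c (goursat_partial_sum \<alpha> C a c S M) s t
      = (\<Sum>n\<in>S. \<Sum>m<M. C * iterated_integral a c (goursat_term \<alpha> C a c n m) s t)"
  proof -
    have "continuous_on X (\<lambda>(r, w). \<Sum>m<M. goursat_term \<alpha> C a c n m r w)" for X n
      unfolding goursat_term_def case_prod_beta by (intro continuous_intros) auto
    then show ?thesis
      unfolding goursat_partial_sum_def
      by (simp add: assms(1) iterated_integral_sum continuous_on_goursat_term sum_distrib_left)
  qed
  also have "\<dots> = (\<Sum>n\<in>S. \<Sum>m<M. goursat_term \<alpha> C a c n (Suc m) s t)"
    using assms by (simp add: goursat_term_integral)
  moreover have "(\<Sum>m<M. goursat_term \<alpha> C a c n m s t - goursat_term \<alpha> C a c n (Suc m) s t)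
      = \<alpha> n * (s - a) ^ n - goursat_term \<alpha> C a c n M s t" for n
    using sum_lessThan_telescope'[of "\<lambda>m. goursat_term \<alpha> C a c n m s t" M]
    by (simp add: goursat_term_0)
  ultimately show ?thesis
    unfolding goursat_partial_sum_def by (simp add: sum_subtractf[symmetric])
qed

lemma goursat_term_abs_le:
  assumes "a \<le> s" and "c \<le> t"
  shows "\<bar>goursat_term \<alpha> C a c n m s t\<bar>
           \<le> \<bar>\<alpha> n\<bar> * (s - a) ^ n * ((\<bar>C\<bar> * (s - a) * (t - c)) ^ m / fact m)"
proof -
  have "fact n / fact (n + m) \<le> (1::real)"
    by (simp add: fact_mono)
  then have "\<bar>goursat_term \<alpha> C a c n m s t\<bar>
      = \<bar>\<alpha> n\<bar> * (s - a) ^ n * ((\<bar>C\<bar> * (s - a) * (t - c)) ^ m / fact m) * (fact n / fact (n + m))"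
    using assms by (simp add: goursat_term_def abs_mult power_abs power_add power_mult_distrib)
  also have "\<dots> \<le> \<bar>\<alpha> n\<bar> * (s - a) ^ n * ((\<bar>C\<bar> * (s - a) * (t - c)) ^ m / fact m)"
    using assms \<open>fact n / fact (n + m) \<le> 1\<close> by (intro mult_left_le) auto
  finally show ?thesis .
qed

lemma summable_goursat_term:
  assumes "a \<le> s" and "c \<le> t"
  shows "summable (\<lambda>m. goursat_term \<alpha> C a c n m s t)"
proof (rule summable_comparison_test')
  show "summable (\<lambda>m. \<bar>\<alpha> n\<bar> * (s - a) ^ n * ((\<bar>C\<bar> * (s - a) * (t - c)) ^ m / fact m))"
    by (intro summable_mult sums_summable[OF exp_sums_real])
  show "norm (goursat_term \<alpha> C a c n m s t)
      \<le> \<bar>\<alpha> n\<bar> * (s - a) ^ n * ((\<bar>C\<bar> * (s - a) * (t - c)) ^ m / fact m)" for m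
    using goursat_term_abs_le[OF assms] by simp
qed

lemma goursat_partial_sum_tendsto:
  assumes "a \<le> s" and "c \<le> t"
  shows "(\<lambda>M. goursat_partial_sum \<alpha> C a c S M s t) \<longlonglongrightarrow> (\<Sum>n\<in>S. \<Sum>m. goursat_term \<alpha> C a c n m s t)"
  unfolding goursat_partial_sum_def
  by (intro tendsto_sum summable_LIMSEQ summable_goursat_term assms)

lemma sum_goursat_term_abs_le:
  assumes "r \<in> {a..b}" and "w \<in> {c..d}"
  shows "\<bar>\<Sum>n\<in>S. goursat_term \<alpha> C a c n M r w\<bar>
           \<le> (\<Sum>n\<in>S. \<bar>\<alpha> n\<bar> * (b - a) ^ n) * ((\<bar>C\<bar> * (b - a) * (d - c)) ^ M / fact M)"
proof -
  have "\<bar>goursat_term \<alpha> C a c n M r w\<bar> \<le> \<bar>\<alpha> n\<bar> * (b - a) ^ n * ((\<bar>C\<bar> * (b - a) * (d - c)) ^ M / fact M)"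
    for n
  proof -
    have "\<bar>goursat_term \<alpha> C a c n M r w\<bar> \<le> \<bar>\<alpha> n\<bar> * (r - a) ^ n * ((\<bar>C\<bar> * (r - a) * (w - c)) ^ M / fact M)"
      using assms by (intro goursat_term_abs_le) auto
    also have "\<dots> \<le> \<bar>\<alpha> n\<bar> * (b - a) ^ n * ((\<bar>C\<bar> * (b - a) * (d - c)) ^ M / fact M)"
      using assms
      by (intro mult_mono mult_left_mono power_mono divide_right_mono mult_nonneg_nonneg) auto
    finally show ?thesis .
  qed
  then have "\<bar>\<Sum>n\<in>S. goursat_term \<alpha> C a c n M r w\<bar>
      \<le> (\<Sum>n\<in>S. \<bar>\<alpha> n\<bar> * (b - a) ^ n * ((\<bar>C\<bar> * (b - a) * (d - c)) ^ M / fact M))"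
    by (intro order.trans[OF sum_abs sum_mono])
  then show ?thesis
    by (simp only: sum_distrib_right)
qed

lemma goursat_partial_sum_pair_defect_le:
  fixes p q :: "nat \<Rightarrow> real" and C :: real and M :: nat
  assumes "finite S" and "finite T" and rv: "r \<in> {a..b}" "v \<in> {c..d}"
  defines "U \<equiv> \<lambda>r v. goursat_partial_sum p C a c S M r v + goursat_partial_sum q C c a T M v r"
  shows "\<bar>U r v - C * iterated_integral a c U r v - (\<Sum>n\<in>S. p n * (r - a) ^ n) - (\<Sum>n\<in>T. q n * (v - c) ^ n)\<bar>
           \<le> (\<Sum>n\<in>S. \<bar>p n\<bar> * (b - a) ^ n) * ((\<bar>C\<bar> * (b - a) * (d - c)) ^ M / fact M)
             + (\<Sum>n\<in>T. \<bar>q n\<bar> * (d - c) ^ n) * ((\<bar>C\<bar> * (d - c) * (b - a)) ^ M / fact M)"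
proof -
  have cont_q: "continuous_on X (\<lambda>(r, v). goursat_partial_sum q C c a T M v r)" for X
    unfolding goursat_partial_sum_def goursat_term_def case_prod_beta by (intro continuous_intros) auto
  have "iterated_integral a c U r v
      = iterated_integral a c (goursat_partial_sum p C a c S M) r v
        + iterated_integral c a (goursat_partial_sum q C c a T M) v r"
    unfolding U_def
    by (simp add: iterated_integral_add continuous_on_goursat_partial_sum cont_q
        iterated_integral_swap[OF cont_q])
  then have "U r v - C * iterated_integral a c U r v - (\<Sum>n\<in>S. p n * (r - a) ^ n) - (\<Sum>n\<in>T. q n * (v - c) ^ n)
      = - (\<Sum>n\<in>S. goursat_term p C a c n M r v) - (\<Sum>n\<in>T. goursat_term q C c a n M v r)"
    using goursat_partial_sum_defect[of S a r c v p C M] goursat_partial_sum_defect[of T c v a r q C M]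
      assms(1,2) rv
    unfolding U_def by (simp add: right_diff_distrib distrib_left)
  moreover have "\<bar>\<Sum>n\<in>S. goursat_term p C a c n M r v\<bar>
      \<le> (\<Sum>n\<in>S. \<bar>p n\<bar> * (b - a) ^ n) * ((\<bar>C\<bar> * (b - a) * (d - c)) ^ M / fact M)"
    using rv by (rule sum_goursat_term_abs_le)
  moreover have "\<bar>\<Sum>n\<in>T. goursat_term q C c a n M v r\<bar>
      \<le> (\<Sum>n\<in>T. \<bar>q n\<bar> * (d - c) ^ n) * ((\<bar>C\<bar> * (d - c) * (b - a)) ^ M / fact M)"
    using rv by (intro sum_goursat_term_abs_le)
  ultimately show ?thesis
    by linarith
qed

lemma goursat_series_approximation:
  fixes w :: "real \<Rightarrow> real \<Rightarrow> real" and p q :: "nat \<Rightarrow> real"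
  assumes cont: "continuous_on ({a..b} \<times> {c..d}) (\<lambda>(s, t). w s t)"
    and fin: "finite S" "finite T"
    and defect: "\<And>s t. s \<in> {a..b} \<Longrightarrow> t \<in> {c..d} \<Longrightarrow>
      \<bar>w s t - C * iterated_integral a c w s t - (\<Sum>n\<in>S. p n * (s - a) ^ n) - (\<Sum>n\<in>T. q n * (t - c) ^ n)\<bar> \<le> \<epsilon>"
    and st: "s \<in> {a..b}" "t \<in> {c..d}"
  shows "\<bar>w s t - (\<Sum>n\<in>S. \<Sum>m. goursat_term p C a c n m s t) - (\<Sum>n\<in>T. \<Sum>m. goursat_term q C c a n m t s)\<bar>
           \<le> \<epsilon> * exp (\<bar>C\<bar> * (b - a) * (d - c))"
proof -
  define U where "U M r v = goursat_partial_sum p C a c S M r v + goursat_partial_sum q C c a T M v r"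
    for M r v
  define W where "W M r v = w r v - U M r v" for M r v
  define \<delta> where "\<delta> M = (\<Sum>n\<in>S. \<bar>p n\<bar> * (b - a) ^ n) * ((\<bar>C\<bar> * (b - a) * (d - c)) ^ M / fact M)
    + (\<Sum>n\<in>T. \<bar>q n\<bar> * (d - c) ^ n) * ((\<bar>C\<bar> * (d - c) * (b - a)) ^ M / fact M)" for M
  have cont_U: "continuous_on X (\<lambda>(r, v). U M r v)" for X M
    unfolding U_def goursat_partial_sum_def goursat_term_def case_prod_beta
    by (intro continuous_intros) auto
  have cont_W: "continuous_on ({a..b} \<times> {c..d}) (\<lambda>(r, v). W M r v)" for M
    using continuous_on_diff[OF cont cont_U] unfolding W_def by (simp add: case_prod_beta)
  have W_defect: "\<bar>W M r v - C * iterated_integral a c (W M) r v\<bar> \<le> \<epsilon> + \<delta> M"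
    if rv: "r \<in> {a..b}" "v \<in> {c..d}" for M r v
  proof -
    have "{a..r} \<times> {c..v} \<subseteq> {a..b} \<times> {c..d}"
      using rv by auto
    then have "iterated_integral a c (W M) r v = iterated_integral a c w r v - iterated_integral a c (U M) r v"
      unfolding W_def by (intro iterated_integral_diff continuous_on_subset[OF cont] cont_U)
    then have "C * iterated_integral a c (W M) r v
        = C * iterated_integral a c w r v - C * iterated_integral a c (U M) r v"
      by (simp add: right_diff_distrib)
    then show ?thesis
      using defect[OF rv] goursat_partial_sum_pair_defect_le[OF fin rv, of p C M q]
      unfolding W_def[of M r v] U_def[abs_def] \<delta>_def by linarith
  qed
  define E where "E = exp (\<bar>C\<bar> * (b - a) * (d - c))"
  have bound: "\<bar>W M s t\<bar> \<le> (\<epsilon> + \<delta> M) * E" for M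
    unfolding E_def using goursat_stability[OF cont_W W_defect st] by (simp add: algebra_simps)
  have "(\<lambda>M. \<bar>W M s t\<bar>)
      \<longlonglongrightarrow> \<bar>w s t - ((\<Sum>n\<in>S. \<Sum>m. goursat_term p C a c n m s t) + (\<Sum>n\<in>T. \<Sum>m. goursat_term q C c a n m t s))\<bar>"
    unfolding W_def U_def using st
    by (intro tendsto_intros goursat_partial_sum_tendsto) auto
  moreover have "\<delta> \<longlonglongrightarrow> 0"
    unfolding \<delta>_def by (intro tendsto_add_zero tendsto_mult_right_zero power_div_fact_tendsto_zero)
  then have "(\<lambda>M. (\<epsilon> + \<delta> M) * E) \<longlonglongrightarrow> (\<epsilon> + 0) * E"
    by (intro tendsto_intros)
  ultimately show ?thesis
    unfolding E_def[symmetric] diff_diff_eq using bound by (intro LIMSEQ_le) auto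
qed

lemma sum_goursat_series_abs_le:
  fixes \<alpha> :: "nat \<Rightarrow> real"
  assumes "finite S" and "\<And>x. x \<in> {a..b} \<Longrightarrow> \<bar>\<Sum>n\<in>S. \<alpha> n * (x - a) ^ n\<bar> \<le> \<eta>"
    and "s \<in> {a..b}" and "t \<in> {c..d}"
  shows "\<bar>\<Sum>n\<in>S. \<Sum>m. goursat_term \<alpha> C a c n m s t\<bar> \<le> \<eta> * exp (\<bar>C\<bar> * (b - a) * (d - c))"
  using goursat_series_approximation[where w = "\<lambda>_ _. 0" and T = "{}" and C = C and \<epsilon> = \<eta>,
      OF _ assms(1) finite.emptyI _ assms(3,4)] assms(2)
  by (simp add: iterated_integral_def)

lemma summable_goursat_series:
  fixes \<alpha> :: "nat \<Rightarrow> real"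
  assumes lim: "uniform_limit {a..b} (\<lambda>N x. \<Sum>n<N. \<alpha> n * (x - a) ^ n) \<sigma> sequentially"
    and st: "s \<in> {a..b}" "t \<in> {c..d}"
  shows "summable (\<lambda>n. \<Sum>m. goursat_term \<alpha> C a c n m s t)"
  unfolding summable_Cauchy
proof (intro allI impI)
  fix e :: real
  assume "0 < e"
  define E where "E = exp (\<bar>C\<bar> * (b - a) * (d - c))"
  have "0 < e / (2 * E)"
    using \<open>0 < e\<close> by (simp add: E_def)
  moreover have "uniformly_Cauchy_on {a..b} (\<lambda>N x. \<Sum>n<N. \<alpha> n * (x - a) ^ n)"
    using lim by (intro uniformly_convergent_Cauchy) (auto simp: uniformly_convergent_on_def)
  ultimately obtain N where N: "\<And>x m n. x \<in> {a..b} \<Longrightarrow> N \<le> m \<Longrightarrow> N \<le> n \<Longrightarrow>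
      dist (\<Sum>k<m. \<alpha> k * (x - a) ^ k) (\<Sum>k<n. \<alpha> k * (x - a) ^ k) < e / (2 * E)"
    unfolding uniformly_Cauchy_on_def by meson
  have block_le: "\<bar>\<Sum>k = m..<n. \<Sum>j. goursat_term \<alpha> C a c k j s t\<bar> \<le> e / (2 * E) * exp (\<bar>C\<bar> * (b - a) * (d - c))"
    if "N \<le> m" "m \<le> n" for m n
  proof (rule sum_goursat_series_abs_le[OF finite_atLeastLessThan _ st])
    fix x
    assume "x \<in> {a..b}"
    moreover have "(\<Sum>k = m..<n. \<alpha> k * (x - a) ^ k) = (\<Sum>k<n. \<alpha> k * (x - a) ^ k) - (\<Sum>k<m. \<alpha> k * (x - a) ^ k)"
      using sum_diff_nat_ivl[of 0 m n "\<lambda>k. \<alpha> k * (x - a) ^ k"] that by (simp add: atLeast0LessThan)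
    ultimately show "\<bar>\<Sum>k = m..<n. \<alpha> k * (x - a) ^ k\<bar> \<le> e / (2 * E)"
      using N[of x n m] that by (simp add: dist_real_def)
  qed
  have "e / (2 * E) * exp (\<bar>C\<bar> * (b - a) * (d - c)) < e"
    using \<open>0 < e\<close> by (simp add: E_def)
  then have "norm (\<Sum>k = m..<n. \<Sum>j. goursat_term \<alpha> C a c k j s t) < e" if "N \<le> m" for m n
    using block_le[OF that] \<open>0 < e\<close> by (cases "m \<le> n") (auto intro: order.strict_trans1)
  then show "\<exists>N. \<forall>m\<ge>N. \<forall>n. norm (\<Sum>k = m..<n. \<Sum>j. goursat_term \<alpha> C a c k j s t) < e"
    by blast
qed

lemma power_series_at_center:
  fixes \<alpha> :: "nat \<Rightarrow> real"
  assumes "uniform_limit {a..b} (\<lambda>N x. \<Sum>n<N. \<alpha> n * (x - a) ^ n) \<sigma> sequentially" and "a \<le> b"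
  shows "\<sigma> a = \<alpha> 0"
proof -
  have "(\<lambda>N. \<Sum>n<N. \<alpha> n * (a - a) ^ n) \<longlonglongrightarrow> \<sigma> a"
    by (rule tendsto_uniform_limitI[OF assms(1)]) (use assms(2) in simp)
  then have "(\<lambda>N. \<Sum>n<Suc N. \<alpha> n * (a - a) ^ n) \<longlonglongrightarrow> \<sigma> a"
    by (rule LIMSEQ_Suc)
  moreover have "(\<Sum>n<Suc N. \<alpha> n * (a - a) ^ n) = \<alpha> 0" for N
    by (simp add: sum.lessThan_Suc_shift del: sum.lessThan_Suc)
  ultimately show ?thesis
    by (simp add: LIMSEQ_const_iff)
qed

lemma goursat_solution_truncation_bound:
  fixes p q :: "nat \<Rightarrow> real"
  assumes k: "goursat_solution a b c d C \<sigma> \<tau> k" and "\<sigma> a = p 0"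
    and p_close: "\<And>x. x \<in> {a..b} \<Longrightarrow> \<bar>\<sigma> x - (\<Sum>n<Suc N. p n * (x - a) ^ n)\<bar> \<le> \<eta>"
    and q_close: "\<And>y. y \<in> {c..d} \<Longrightarrow> \<bar>\<tau> y - (\<Sum>n<N. q n * (y - c) ^ n)\<bar> \<le> \<eta>"
    and st: "s \<in> {a..b}" "t \<in> {c..d}"
  shows "\<bar>k s t - (\<Sum>n<N. \<Sum>m. goursat_term p C a c (Suc n) m s t) - (\<Sum>n<N. \<Sum>m. goursat_term q C c a n m t s)\<bar>
           \<le> 2 * \<eta> * exp (\<bar>C\<bar> * (b - a) * (d - c))"
proof -
  have "\<bar>k s t - (\<Sum>n\<in>Suc ` {..<N}. \<Sum>m. goursat_term p C a c n m s t) - (\<Sum>n<N. \<Sum>m. goursat_term q C c a n m t s)\<bar>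
      \<le> 2 * \<eta> * exp (\<bar>C\<bar> * (b - a) * (d - c))"
  proof (rule goursat_series_approximation[OF goursat_solutionD(1)[OF k] finite_imageI finite_lessThan _ st])
    fix x y
    assume xy: "x \<in> {a..b}" "y \<in> {c..d}"
    have "(\<Sum>n\<in>Suc ` {..<N}. p n * (x - a) ^ n) = (\<Sum>n<Suc N. p n * (x - a) ^ n) - p 0"
      by (simp add: sum.reindex sum.lessThan_Suc_shift del: sum.lessThan_Suc)
    then show "\<bar>k x y - C * iterated_integral a c k x y - (\<Sum>n\<in>Suc ` {..<N}. p n * (x - a) ^ n)
        - (\<Sum>n<N. q n * (y - c) ^ n)\<bar> \<le> 2 * \<eta>"
      using goursat_solutionD(2)[OF k xy] p_close[OF xy(1)] q_close[OF xy(2)] \<open>\<sigma> a = p 0\<close>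
      by linarith
  qed simp
  then show ?thesis
    by (simp add: sum.reindex)
qed

lemma goursat_solution_partial_sums_tendsto:
  fixes p q :: "nat \<Rightarrow> real"
  assumes p_lim: "uniform_limit {a..b} (\<lambda>N s. \<Sum>n<N. p n * (s - a) ^ n) \<sigma> sequentially"
    and q_lim: "uniform_limit {c..d} (\<lambda>N t. \<Sum>n<N. q n * (t - c) ^ n) \<tau> sequentially"
    and k: "goursat_solution a b c d C \<sigma> \<tau> k"
    and st: "s \<in> {a..b}" "t \<in> {c..d}"
  shows "(\<lambda>N. (\<Sum>n<N. \<Sum>m. goursat_term p C a c (Suc n) m s t) + (\<Sum>n<N. \<Sum>m. goursat_term q C c a n m t s))
           \<longlonglongrightarrow> k s t"
proof (rule tendstoI)
  fix e :: real
  assume "0 < e"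
  define E where "E = exp (\<bar>C\<bar> * (b - a) * (d - c))"
  define \<eta> where "\<eta> = e / (3 * E)"
  have "0 < \<eta>" and "2 * \<eta> * E < e"
    using \<open>0 < e\<close> by (simp_all add: \<eta>_def E_def)
  have "\<sigma> a = p 0"
    using power_series_at_center[OF p_lim] st by simp
  have "\<forall>\<^sub>F N in sequentially. \<forall>x\<in>{a..b}. dist (\<Sum>n<Suc N. p n * (x - a) ^ n) (\<sigma> x) < \<eta>"
    using eventually_sequentially_Suc[of "\<lambda>N. \<forall>x\<in>{a..b}. dist (\<Sum>n<N. p n * (x - a) ^ n) (\<sigma> x) < \<eta>"]
      uniform_limitD[OF p_lim \<open>0 < \<eta>\<close>]
    by blast
  moreover have "\<forall>\<^sub>F N in sequentially. \<forall>y\<in>{c..d}. dist (\<Sum>n<N. q n * (y - c) ^ n) (\<tau> y) < \<eta>"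
    using uniform_limitD[OF q_lim \<open>0 < \<eta>\<close>] .
  ultimately show "\<forall>\<^sub>F N in sequentially.
      dist ((\<Sum>n<N. \<Sum>m. goursat_term p C a c (Suc n) m s t) + (\<Sum>n<N. \<Sum>m. goursat_term q C c a n m t s)) (k s t) < e"
  proof eventually_elim
    case (elim N)
    have "\<bar>k s t - (\<Sum>n<N. \<Sum>m. goursat_term p C a c (Suc n) m s t) - (\<Sum>n<N. \<Sum>m. goursat_term q C c a n m t s)\<bar>
        \<le> 2 * \<eta> * exp (\<bar>C\<bar> * (b - a) * (d - c))"
    proof (rule goursat_solution_truncation_bound[OF k])
      show "\<bar>\<sigma> x - (\<Sum>n<Suc N. p n * (x - a) ^ n)\<bar> \<le> \<eta>" if "x \<in> {a..b}" for x
        using elim(1) that by (force simp: dist_real_def abs_minus_commute)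
      show "\<bar>\<tau> y - (\<Sum>n<N. q n * (y - c) ^ n)\<bar> \<le> \<eta>" if "y \<in> {c..d}" for y
        using elim(2) that by (force simp: dist_real_def abs_minus_commute)
    qed (use \<open>\<sigma> a = p 0\<close> st in auto)
    with \<open>2 * \<eta> * E < e\<close> show ?case
      by (simp add: E_def dist_real_def abs_minus_commute)
  qed
qed

lemma goursat_solution_eq_series:
  fixes p q :: "nat \<Rightarrow> real"
  assumes p_lim: "uniform_limit {a..b} (\<lambda>N s. \<Sum>n<N. p n * (s - a) ^ n) \<sigma> sequentially"
    and q_lim: "uniform_limit {c..d} (\<lambda>N t. \<Sum>n<N. q n * (t - c) ^ n) \<tau> sequentially"
    and k: "goursat_solution a b c d C \<sigma> \<tau> k"
    and st: "s \<in> {a..b}" "t \<in> {c..d}"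
  shows "k s t = (\<Sum>n. \<Sum>m. goursat_term p C a c (Suc n) m s t) + (\<Sum>n. \<Sum>m. goursat_term q C c a n m t s)"
proof -
  have "summable (\<lambda>n. \<Sum>m. goursat_term p C a c (Suc n) m s t)"
    using summable_goursat_series[OF p_lim st] by (rule summable_Suc_iff[THEN iffD2])
  moreover have "summable (\<lambda>n. \<Sum>m. goursat_term q C c a n m t s)"
    using summable_goursat_series[OF q_lim st(2,1)] .
  ultimately show ?thesis
    by (intro LIMSEQ_unique[OF goursat_solution_partial_sums_tendsto[OF assms]] tendsto_add
        summable_LIMSEQ)
qed

theorem mainTheorem6:
  fixes a b c d C :: real and p q :: "nat \<Rightarrow> real"
    and \<sigma> \<tau> :: "real \<Rightarrow> real" and k :: "real \<Rightarrow> real \<Rightarrow> real"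
  assumes "a < b" and "c < d" and "C \<noteq> 0"
    and "p 0 = q 0"
    and "uniform_limit {a..b} (\<lambda>N s. \<Sum>n<N. p n * (s - a) ^ n) \<sigma> sequentially"
    and "uniform_limit {c..d} (\<lambda>N t. \<Sum>n<N. q n * (t - c) ^ n) \<tau> sequentially"
    and "goursat_solution a b c d C \<sigma> \<tau> k"
    and "s \<in> {a..b}" and "t \<in> {c..d}"
  shows "(k s t =
           (\<Sum>n. \<Sum>m. p (Suc n) * (C * (t - c)) ^ m * (s - a) ^ (Suc n + m) / fact m
                        * fact (Suc n) / fact (Suc n + m))
         + (\<Sum>n. \<Sum>m. q n * (C * (s - a)) ^ m * (t - c) ^ (n + m) / fact m
                        * fact n / fact (n + m))) \<and>
         (k s t =
           (\<Sum>n. \<Sum>m. p n * (C * (t - c)) ^ m * (s - a) ^ (n + m) / fact m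
                        * fact n / fact (n + m))
         + (\<Sum>n. \<Sum>m. q (Suc n) * (C * (s - a)) ^ m * (t - c) ^ (Suc n + m) / fact m
                        * fact (Suc n) / fact (Suc n + m)))"
proof -
  define A where "A n = (\<Sum>m. goursat_term p C a c n m s t)" for n
  define B where "B n = (\<Sum>m. goursat_term q C c a n m t s)" for n
  have first: "k s t = (\<Sum>n. A (Suc n)) + (\<Sum>n. B n)"
    unfolding A_def B_def using goursat_solution_eq_series[OF assms(5-9)] .
  have "summable A" "summable B"
    unfolding A_def B_def using summable_goursat_series assms(5,6,8,9) by blast+
  moreover have "A 0 = B 0"
    unfolding A_def B_def goursat_term_def using \<open>p 0 = q 0\<close> by (simp add: power_mult_distrib mult_ac)
  ultimately have second: "k s t = (\<Sum>n. A n) + (\<Sum>n. B (Suc n))"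
    using first by (simp add: suminf_split_head)
  show ?thesis
    using first second unfolding A_def B_def goursat_term_def by blast
qed

end
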